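(* For every integer $n\ge 13$, $$\lambda_{\min}\big(\mathcal U(n-5,3)^c\big)<\lambda_{\min}\big(\mathcal U'(n-4)^c\big).$$
   Context: All graphs are simple and finite. For a graph $G$, $\lambda_{\min}(G)$ denotes the least eigenvalue of the adjacency matrix $A(G)$, and $G^c$ denotes the complement of $G$. $K_{1,m}$ is the star with $m$ edges; its vertex of degree $m$ is the center and the others are pendant vertices. $S_m^3$ denotes the graph of order $m$ obtained from $K_{1,m-1}$ by adding one edge between two of its pendant vertices. For integers $p\ge 1$, $q\ge 3$, $\mathcal U(p,q)$ is the graph of order $p+q+2$ obtained from disjoint copies of $K_{1,p}$ and $S_{q+1}^3$ by adding one edge joining a pendant vertex of $K_{1,p}$ to a pendant (degree-one) vertex of $S_{q+1}^3$. For an integer $p\ge 1$, $\mathcal U'(p)$ is the graph of order $p+4$ obtained from disjoint copies of $K_{1,p}$ and the triangle $C_3$ by adding one edge joining a pendant vertex of $K_{1,p}$ to a vertex of $C_3$. *)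

theory Defs
  imports "Jordan_Normal_Form.Char_Poly"
begin

text \<open>A simple graph of order m has vertex set {0..<m}; it is given by an
  edge relation (assumed symmetric and irreflexive on {0..<m}).\<close>

definition adj_mat :: "nat \<Rightarrow> (nat \<Rightarrow> nat \<Rightarrow> bool) \<Rightarrow> real mat" where
  "adj_mat m E = mat m m (\<lambda>(i, j). if E i j then 1 else 0)"

definition compl_graph :: "(nat \<Rightarrow> nat \<Rightarrow> bool) \<Rightarrow> nat \<Rightarrow> nat \<Rightarrow> bool" where
  "compl_graph E i j = (i \<noteq> j \<and> \<not> E i j)"

definition lambda_min :: "real mat \<Rightarrow> real" where
  "lambda_min A = Min {k. eigenvalue A k}"

definition sym_edges :: "(nat \<times> nat) set \<Rightarrow> nat \<Rightarrow> nat \<Rightarrow> bool" where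
  "sym_edges S i j = ((i, j) \<in> S \<or> (j, i) \<in> S)"

text \<open>U(p,q), order p+q+2: star K_{1,p} with centre 0 and pendants 1..p;
  S^3_{q+1} with centre p+1, pendants p+2..p+q+1 and extra edge (p+q, p+q+1);
  joining edge between pendant 1 of the star and the degree-one vertex p+2.\<close>
definition U_graph :: "nat \<Rightarrow> nat \<Rightarrow> nat \<Rightarrow> nat \<Rightarrow> bool" where
  "U_graph p q = sym_edges
     ({(0, i) | i. 1 \<le> i \<and> i \<le> p} \<union> {(p + 1, j) | j. p + 2 \<le> j \<and> j \<le> p + q + 1}
      \<union> {(p + q, p + q + 1), (1, p + 2)})"

text \<open>U'(p), order p+4: star K_{1,p} with centre 0 and pendants 1..p;
  triangle on p+1, p+2, p+3; joining edge between pendant 1 and p+1.\<close>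
definition U'_graph :: "nat \<Rightarrow> nat \<Rightarrow> nat \<Rightarrow> bool" where
  "U'_graph p = sym_edges
     ({(0, i) | i. 1 \<le> i \<and> i \<le> p}
      \<union> {(p + 1, p + 2), (p + 2, p + 3), (p + 1, p + 3), (1, p + 1)})"

end

theory Submission
  imports Defs
begin

text \<open>Let \<open>\<theta>(n) = (15 - 8n)/(2n + 1)\<close>. For \<open>U(n-5,3)\<^sup>c\<close> the eigenvalue equations,
  restricted to vectors that are constant on the interchangeable pendant vertices, reduce to the
  sextic \<open>f = U_poly\<close>; since \<open>f(-n) > 0 > f(\<theta>(n))\<close>, some root \<open>\<le> \<theta>(n)\<close> is an eigenvalue, with an
  explicit eigenvector. For \<open>U'(n-4)\<^sup>c\<close> every eigenvector with eigenvalue \<open>k \<notin> {0,-1}\<close> is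
  annihilated by the quintic \<open>g(k) = U'_poly\<close>, and \<open>g < 0\<close> below \<open>\<theta>(n)\<close>, so all its eigenvalues exceed
  \<open>\<theta>(n)\<close>; \<open>0\<close> is one of them, so its least eigenvalue exists.\<close>

section \<open>Adjacency matrices and least eigenvalues\<close>

lemma adj_mat_carrier: "adj_mat n E \<in> carrier_mat n n"
  unfolding adj_mat_def by simp

lemma adj_mat_mult_vec_nth:
  assumes "v \<in> carrier_vec n" "i < n"
  shows "(adj_mat n E *\<^sub>v v) $ i = (\<Sum>j \<in> {j. j < n \<and> E i j}. v $ j)"
proof -
  have "(adj_mat n E *\<^sub>v v) $ i = (\<Sum>j\<in>{0..<n}. if E i j then v $ j else 0)"
    using assms unfolding adj_mat_def by (auto simp: scalar_prod_def intro: sum.cong)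
  also have "\<dots> = (\<Sum>j \<in> {j. j < n \<and> E i j}. v $ j)"
    by (subst sum.inter_filter[symmetric]) (auto intro: sum.cong)
  finally show ?thesis .
qed

lemma compl_adj_mat_mult_vec_nth:
  assumes "v \<in> carrier_vec n" "i < n"
  shows "(adj_mat n (compl_graph E) *\<^sub>v v) $ i
     = (\<Sum>j<n. v $ j) - (\<Sum>j \<in> {j. j < n \<and> (j = i \<or> E i j)}. v $ j)"
proof -
  have "{j. j < n \<and> compl_graph E i j} = {..<n} - {j. j < n \<and> (j = i \<or> E i j)}"
    unfolding compl_graph_def by auto
  moreover have "(\<Sum>j \<in> {..<n} - {j. j < n \<and> (j = i \<or> E i j)}. v $ j)
     = (\<Sum>j<n. v $ j) - (\<Sum>j \<in> {j. j < n \<and> (j = i \<or> E i j)}. v $ j)"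
    by (rule sum_diff) auto
  ultimately show ?thesis
    using adj_mat_mult_vec_nth[OF assms, of "compl_graph E"] by simp
qed

lemma eigenvalue_adj_mat_iff:
  "eigenvalue (adj_mat n E) k \<longleftrightarrow> (\<exists>v \<in> carrier_vec n. v \<noteq> 0\<^sub>v n \<and>
     (\<forall>i < n. (adj_mat n E *\<^sub>v v) $ i = k * v $ i))"
proof -
  have "adj_mat n E *\<^sub>v v = k \<cdot>\<^sub>v v \<longleftrightarrow> (\<forall>i < n. (adj_mat n E *\<^sub>v v) $ i = k * v $ i)"
    if v: "v \<in> carrier_vec n" for v
  proof
    assume "adj_mat n E *\<^sub>v v = k \<cdot>\<^sub>v v"
    then show "\<forall>i < n. (adj_mat n E *\<^sub>v v) $ i = k * v $ i"
      using v by (metis carrier_vecD index_smult_vec(1))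
  qed (use v adj_mat_carrier[of n E] in \<open>auto intro!: eq_vecI\<close>)
  then show ?thesis
    unfolding eigenvalue_def eigenvector_def using adj_mat_carrier[of n E] by auto
qed

lemma finite_eigenvalues_adj_mat: "finite {k. eigenvalue (adj_mat n E) k}"
proof -
  have "char_poly (adj_mat n E) \<noteq> 0"
    using degree_monic_char_poly[OF adj_mat_carrier, of n E] by auto
  moreover have "{k. eigenvalue (adj_mat n E) k} = {k. poly (char_poly (adj_mat n E)) k = 0}"
    using eigenvalue_root_char_poly[OF adj_mat_carrier] by auto
  ultimately show ?thesis using poly_roots_finite by simp
qed

lemma lambda_min_le:
  "eigenvalue (adj_mat n E) k \<Longrightarrow> lambda_min (adj_mat n E) \<le> k"
  unfolding lambda_min_def using finite_eigenvalues_adj_mat by (intro Min_le) auto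

lemma eigenvalue_lambda_min:
  "eigenvalue (adj_mat n E) k \<Longrightarrow> eigenvalue (adj_mat n E) (lambda_min (adj_mat n E))"
  unfolding lambda_min_def using finite_eigenvalues_adj_mat Min_in[of "{k. eigenvalue (adj_mat n E) k}"]
  by blast

lemma sum_lessThan_split_01_range_tail:
  fixes f :: "nat \<Rightarrow> 'a::comm_monoid_add"
  assumes "1 \<le> p"
  shows "(\<Sum>j<p+1+c. f j) = f 0 + f 1 + (\<Sum>j\<in>{2..p}. f j) + (\<Sum>j<c. f (p+1+j))"
proof -
  have "x \<in> (\<lambda>j. p+1+j) ` {..<c}" if "p < x" "x < p+1+c" for x
    using that by (intro image_eqI[of _ _ "x - (p+1)"]) auto
  then have "{..<p+1+c} = {0,1} \<union> ({2..p} \<union> (\<lambda>j. p+1+j) ` {..<c})"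
    using assms by (auto simp: not_le) (meson not_le)
  moreover have "{0,1} \<inter> ({2..p} \<union> (\<lambda>j. p+1+j) ` {..<c}) = {}"
    and "{2..p} \<inter> (\<lambda>j. p+1+j) ` {..<c} = {}"
    using assms by auto
  ultimately have "(\<Sum>j<p+1+c. f j)
      = (\<Sum>j\<in>{0,1}. f j) + ((\<Sum>j\<in>{2..p}. f j) + (\<Sum>j\<in>(\<lambda>j. p+1+j) ` {..<c}. f j))"
    by (simp add: sum.union_disjoint add.assoc)
  also have "(\<Sum>j\<in>(\<lambda>j. p+1+j) ` {..<c}. f j) = (\<Sum>j<c. f (p+1+j))"
    by (subst sum.reindex) (auto simp: inj_on_def)
  finally show ?thesis
    by (simp add: ac_simps)
qed

section \<open>The complement of \<open>U'(p)\<close>\<close>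

lemma U'_graph_iff: "U'_graph p i j \<longleftrightarrow>
     (i = 0 \<and> 1 \<le> j \<and> j \<le> p) \<or> (j = 0 \<and> 1 \<le> i \<and> i \<le> p)
   \<or> (i = p+1 \<and> j = p+2) \<or> (i = p+2 \<and> j = p+1) \<or> (i = p+2 \<and> j = p+3) \<or> (i = p+3 \<and> j = p+2)
   \<or> (i = p+1 \<and> j = p+3) \<or> (i = p+3 \<and> j = p+1) \<or> (i = 1 \<and> j = p+1) \<or> (i = p+1 \<and> j = 1)"
  unfolding U'_graph_def sym_edges_def by blast

lemma compl_U'_mult_vec:
  assumes p: "1 \<le> p" and v: "v \<in> carrier_vec (p+4)"
  defines "A \<equiv> adj_mat (p+4) (compl_graph (U'_graph p))"
  defines "S \<equiv> (\<Sum>j<p+4. v $ j)"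
  shows "(A *\<^sub>v v) $ 0 = v$(p+1) + v$(p+2) + v$(p+3)"
    and "(A *\<^sub>v v) $ 1 = S - v$0 - v$1 - v$(p+1)"
    and "\<And>i. 2 \<le> i \<Longrightarrow> i \<le> p \<Longrightarrow> (A *\<^sub>v v) $ i = S - v$0 - v$i"
    and "(A *\<^sub>v v) $ (p+1) = S - v$1 - v$(p+1) - v$(p+2) - v$(p+3)"
    and "(A *\<^sub>v v) $ (p+2) = S - v$(p+1) - v$(p+2) - v$(p+3)"
    and "(A *\<^sub>v v) $ (p+3) = S - v$(p+1) - v$(p+2) - v$(p+3)"
proof -
  note row = compl_adj_mat_mult_vec_nth[OF v, of _ "U'_graph p", folded A_def S_def]
  have "{j. j < p+4 \<and> compl_graph (U'_graph p) 0 j} = {p+1, p+2, p+3}"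
    using p by (auto simp: U'_graph_iff compl_graph_def)
  then show "(A *\<^sub>v v) $ 0 = v$(p+1) + v$(p+2) + v$(p+3)"
    unfolding A_def using adj_mat_mult_vec_nth[OF v, of 0] by simp
  have "{j. j < p+4 \<and> (j = 1 \<or> U'_graph p 1 j)} = {0, 1, p+1}"
    using p by (auto simp: U'_graph_iff)
  then show "(A *\<^sub>v v) $ 1 = S - v$0 - v$1 - v$(p+1)"
    using row[of 1] p by simp
  show "(A *\<^sub>v v) $ i = S - v$0 - v$i" if "2 \<le> i" "i \<le> p" for i
  proof -
    have "{j. j < p+4 \<and> (j = i \<or> U'_graph p i j)} = {0, i}"
      using that by (auto simp: U'_graph_iff)
    then show ?thesis using row[of i] that by simp
  qed
  have "{j. j < p+4 \<and> (j = p+1 \<or> U'_graph p (p+1) j)} = {1, p+1, p+2, p+3}"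
    using p by (auto simp: U'_graph_iff)
  then show "(A *\<^sub>v v) $ (p+1) = S - v$1 - v$(p+1) - v$(p+2) - v$(p+3)"
    using row[of "p+1"] p by simp
  have "{j. j < p+4 \<and> (j = p+2 \<or> U'_graph p (p+2) j)} = {p+1, p+2, p+3}"
    by (auto simp: U'_graph_iff)
  then show "(A *\<^sub>v v) $ (p+2) = S - v$(p+1) - v$(p+2) - v$(p+3)"
    using row[of "p+2"] by simp
  have "{j. j < p+4 \<and> (j = p+3 \<or> U'_graph p (p+3) j)} = {p+1, p+2, p+3}"
    by (auto simp: U'_graph_iff)
  then show "(A *\<^sub>v v) $ (p+3) = S - v$(p+1) - v$(p+2) - v$(p+3)"
    using row[of "p+3"] by simp
qed

lemma sum_vec_U'_split:
  fixes v :: "real vec"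
  assumes "1 \<le> p"
  shows "(\<Sum>j<p+4. v $ j) = v$0 + v$1 + (\<Sum>j\<in>{2..p}. v$j) + v$(p+1) + v$(p+2) + v$(p+3)"
  using sum_lessThan_split_01_range_tail[OF assms, of "\<lambda>j. v $ j" 3]
  by (simp add: eval_nat_numeral ac_simps)

lemma compl_U'_eigenvalue_zero:
  assumes p: "1 \<le> p"
  shows "eigenvalue (adj_mat (p+4) (compl_graph (U'_graph p))) 0"
  unfolding eigenvalue_adj_mat_iff
proof (intro bexI conjI allI impI)
  define v :: "real vec" where "v = vec (p+4) (\<lambda>i. if i = p+2 then 1 else if i = p+3 then -1 else 0)"
  show v: "v \<in> carrier_vec (p+4)"
    unfolding v_def by simp
  show "v \<noteq> 0\<^sub>v (p+4)"
  proof
    assume "v = 0\<^sub>v (p+4)"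
    then have "v $ (p+2) = 0" by simp
    then show False unfolding v_def by simp
  qed
  have "(\<Sum>j\<in>{2..p}. v$j) = 0"
    unfolding v_def by (intro sum.neutral) auto
  then have "(\<Sum>j<p+4. v $ j) = 0"
    unfolding sum_vec_U'_split[OF p] by (simp add: v_def)
  note rows = compl_U'_mult_vec[OF p v, unfolded this]
  fix i assume "i < p+4"
  then consider "i = 0" | "i = 1" | "2 \<le> i \<and> i \<le> p" | "i = p+1" | "i = p+2" | "i = p+3"
    by linarith
  then show "(adj_mat (p+4) (compl_graph (U'_graph p)) *\<^sub>v v) $ i = 0 * v $ i"
    using rows unfolding v_def by cases auto
qed

definition U'_poly :: "real \<Rightarrow> real \<Rightarrow> real" where
  "U'_poly k m = k^5 - m*k^4 + k^4 - 4*m*k^3 - 5*k^3 + m*k^2 - 5*k^2 + 5*m*k + 2*k - 2*m + 2"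

text \<open>The eigenvalue equations of \<open>U'(p)\<^sup>c\<close> after identifying the \<open>m = p - 1\<close> free
  star leaves (value \<open>y\<close>) and the two triangle vertices (value \<open>t\<close>), and removing the
  row sum \<open>S\<close>; \<open>a\<close>, \<open>b\<close>, \<open>c\<close> are the values at the star centre, the linking leaf and the
  linking triangle vertex.\<close>

lemma U'_poly_annihilates:
  fixes k m a b c t y :: real
  assumes "k*a = c + 2*t" and "k*b = m*y + 2*t" and "k*y = b + (m-1)*y + c + 2*t"
    and "k*c = a + m*y" and "k*t = a + b + m*y"
  shows "U'_poly k m * a = 0" "U'_poly k m * b = 0" "U'_poly k m * y = 0"
    "U'_poly k m * c = 0" "U'_poly k m * t = 0"
  using assms unfolding U'_poly_def by Groebner_Basis.algebra+

lemma compl_U'_eigenvector_reduced: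
  fixes v :: "real vec"
  assumes p: "1 \<le> p" and v: "v \<in> carrier_vec (p+4)"
    and row: "\<And>i. i < p+4 \<Longrightarrow> (adj_mat (p+4) (compl_graph (U'_graph p)) *\<^sub>v v) $ i = k * v $ i"
    and k: "k \<noteq> 0" "k \<noteq> -1"
  defines "m \<equiv> real p - 1"
  obtains y where "\<And>i. 2 \<le> i \<Longrightarrow> i \<le> p \<Longrightarrow> v$i = y" and "v$(p+3) = v$(p+2)"
    and "k*v$0 = v$(p+1) + 2*v$(p+2)" and "k*v$1 = m*y + 2*v$(p+2)"
    and "k*y = v$1 + (m-1)*y + v$(p+1) + 2*v$(p+2)"
    and "k*v$(p+1) = v$0 + m*y" and "k*v$(p+2) = v$0 + v$1 + m*y"
proof -
  define S where "S = (\<Sum>j<p+4. v $ j)"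
  note R = compl_U'_mult_vec[OF p v, folded S_def]
  define y where "y = (S - v$0)/(k+1)"
  have y: "(k+1) * y = S - v$0"
    unfolding y_def using k by simp
  have leaf: "v$i = y" if "2 \<le> i" "i \<le> p" for i
  proof -
    have "(k+1) * v$i = (k+1) * y"
      using row[of i] R(3)[OF that] that y by (simp add: algebra_simps)
    then show ?thesis using k by simp
  qed
  have "(\<Sum>j\<in>{2..p}. v$j) = m * y"
    using p leaf unfolding m_def by (simp add: of_nat_diff)
  then have S: "S = v$0 + v$1 + m*y + v$(p+1) + v$(p+2) + v$(p+3)"
    unfolding S_def sum_vec_U'_split[OF p] by simp
  have "k * v$(p+2) = S - v$(p+1) - v$(p+2) - v$(p+3)"
    and "k * v$(p+3) = S - v$(p+1) - v$(p+2) - v$(p+3)"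
    using row[of "p+2"] row[of "p+3"] R(5,6) by simp_all
  then have "k * v$(p+3) = k * v$(p+2)"
    by linarith
  then have tri: "v$(p+3) = v$(p+2)"
    using k by simp
  show thesis
  proof (rule that[OF leaf tri])
    show "k*v$0 = v$(p+1) + 2*v$(p+2)" using row[of 0] R(1) tri by simp
    show "k*v$1 = m*y + 2*v$(p+2)" using row[of 1] R(2) tri S by simp
    show "k*y = v$1 + (m-1)*y + v$(p+1) + 2*v$(p+2)"
      using y tri S by (simp add: algebra_simps)
    show "k*v$(p+1) = v$0 + m*y" using row[of "p+1"] R(4) tri S by simp
    show "k*v$(p+2) = v$0 + v$1 + m*y" using row[of "p+2"] R(5) tri S by simp
  qed
qed

lemma compl_U'_eigenvalue_root:
  assumes p: "1 \<le> p" and ev: "eigenvalue (adj_mat (p+4) (compl_graph (U'_graph p))) k"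
    and k: "k \<noteq> 0" "k \<noteq> -1"
  shows "U'_poly k (real p - 1) = 0"
proof (rule ccontr)
  assume nonroot: "U'_poly k (real p - 1) \<noteq> 0"
  obtain v where v: "v \<in> carrier_vec (p+4)" "v \<noteq> 0\<^sub>v (p+4)"
    and row: "\<And>i. i < p+4 \<Longrightarrow> (adj_mat (p+4) (compl_graph (U'_graph p)) *\<^sub>v v) $ i = k * v $ i"
    using ev unfolding eigenvalue_adj_mat_iff by blast
  obtain y where leaf: "\<And>i. 2 \<le> i \<Longrightarrow> i \<le> p \<Longrightarrow> v$i = y" and tri: "v$(p+3) = v$(p+2)"
    and eqs: "k*v$0 = v$(p+1) + 2*v$(p+2)" "k*v$1 = (real p - 1)*y + 2*v$(p+2)"
      "k*y = v$1 + ((real p - 1)-1)*y + v$(p+1) + 2*v$(p+2)"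
      "k*v$(p+1) = v$0 + (real p - 1)*y" "k*v$(p+2) = v$0 + v$1 + (real p - 1)*y"
    using compl_U'_eigenvector_reduced[OF p v(1) row k] by blast
  have zero: "v$0 = 0" "v$1 = 0" "y = 0" "v$(p+1) = 0" "v$(p+2) = 0"
    using U'_poly_annihilates[OF eqs] nonroot by simp_all
  have "v = 0\<^sub>v (p+4)"
  proof (rule eq_vecI)
    fix i assume "i < dim_vec (0\<^sub>v (p+4))"
    then consider "i = 0" | "i = 1" | "2 \<le> i \<and> i \<le> p" | "i = p+1" | "i = p+2" | "i = p+3"
      by fastforce
    then show "v $ i = 0\<^sub>v (p+4) $ i"
      using zero leaf tri by cases auto
  qed (use v in simp)
  then show False using v(2) by simp
qed

section \<open>The complement of \<open>U(q,3)\<close>\<close>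

lemma U_graph_3_iff: "U_graph q 3 i j \<longleftrightarrow>
     (i = 0 \<and> 1 \<le> j \<and> j \<le> q) \<or> (j = 0 \<and> 1 \<le> i \<and> i \<le> q)
   \<or> (i = q+1 \<and> q+2 \<le> j \<and> j \<le> q+4) \<or> (j = q+1 \<and> q+2 \<le> i \<and> i \<le> q+4)
   \<or> (i = q+3 \<and> j = q+4) \<or> (i = q+4 \<and> j = q+3) \<or> (i = 1 \<and> j = q+2) \<or> (i = q+2 \<and> j = 1)"
proof -
  have "q + 3 + 1 = q + 4" by simp
  then show ?thesis
    unfolding U_graph_def sym_edges_def by (simp only:) blast
qed

lemma compl_U_mult_vec:
  assumes q: "1 \<le> q" and v: "v \<in> carrier_vec (q+5)"
  defines "A \<equiv> adj_mat (q+5) (compl_graph (U_graph q 3))"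
  defines "S \<equiv> (\<Sum>j<q+5. v $ j)"
  shows "(A *\<^sub>v v) $ 0 = v$(q+1) + v$(q+2) + v$(q+3) + v$(q+4)"
    and "(A *\<^sub>v v) $ 1 = S - v$0 - v$1 - v$(q+2)"
    and "\<And>i. 2 \<le> i \<Longrightarrow> i \<le> q \<Longrightarrow> (A *\<^sub>v v) $ i = S - v$0 - v$i"
    and "(A *\<^sub>v v) $ (q+1) = S - v$(q+1) - v$(q+2) - v$(q+3) - v$(q+4)"
    and "(A *\<^sub>v v) $ (q+2) = S - v$1 - v$(q+1) - v$(q+2)"
    and "(A *\<^sub>v v) $ (q+3) = S - v$(q+1) - v$(q+3) - v$(q+4)"
    and "(A *\<^sub>v v) $ (q+4) = S - v$(q+1) - v$(q+3) - v$(q+4)"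
proof -
  note row = compl_adj_mat_mult_vec_nth[OF v, of _ "U_graph q 3", folded A_def S_def]
  have "{j. j < q+5 \<and> compl_graph (U_graph q 3) 0 j} = {q+1, q+2, q+3, q+4}"
    using q by (auto simp: U_graph_3_iff compl_graph_def)
  then show "(A *\<^sub>v v) $ 0 = v$(q+1) + v$(q+2) + v$(q+3) + v$(q+4)"
    unfolding A_def using adj_mat_mult_vec_nth[OF v, of 0] by simp
  have "{j. j < q+5 \<and> (j = 1 \<or> U_graph q 3 1 j)} = {0, 1, q+2}"
    using q by (auto simp: U_graph_3_iff)
  then show "(A *\<^sub>v v) $ 1 = S - v$0 - v$1 - v$(q+2)"
    using row[of 1] q by simp
  show "(A *\<^sub>v v) $ i = S - v$0 - v$i" if "2 \<le> i" "i \<le> q" for i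
  proof -
    have "{j. j < q+5 \<and> (j = i \<or> U_graph q 3 i j)} = {0, i}"
      using that by (auto simp: U_graph_3_iff)
    then show ?thesis using row[of i] that by simp
  qed
  have "{j. j < q+5 \<and> (j = q+1 \<or> U_graph q 3 (q+1) j)} = {q+1, q+2, q+3, q+4}"
    by (auto simp: U_graph_3_iff)
  then show "(A *\<^sub>v v) $ (q+1) = S - v$(q+1) - v$(q+2) - v$(q+3) - v$(q+4)"
    using row[of "q+1"] by simp
  have "{j. j < q+5 \<and> (j = q+2 \<or> U_graph q 3 (q+2) j)} = {1, q+1, q+2}"
    using q by (auto simp: U_graph_3_iff)
  then show "(A *\<^sub>v v) $ (q+2) = S - v$1 - v$(q+1) - v$(q+2)"
    using row[of "q+2"] q by simp
  have "{j. j < q+5 \<and> (j = q+3 \<or> U_graph q 3 (q+3) j)} = {q+1, q+3, q+4}"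
    by (auto simp: U_graph_3_iff)
  then show "(A *\<^sub>v v) $ (q+3) = S - v$(q+1) - v$(q+3) - v$(q+4)"
    using row[of "q+3"] by simp
  have "{j. j < q+5 \<and> (j = q+4 \<or> U_graph q 3 (q+4) j)} = {q+1, q+3, q+4}"
    by (auto simp: U_graph_3_iff)
  then show "(A *\<^sub>v v) $ (q+4) = S - v$(q+1) - v$(q+3) - v$(q+4)"
    using row[of "q+4"] by simp
qed

lemma sum_vec_U_split:
  fixes v :: "real vec"
  assumes "1 \<le> q"
  shows "(\<Sum>j<q+5. v $ j) = v$0 + v$1 + (\<Sum>j\<in>{2..q}. v$j) + v$(q+1) + v$(q+2) + v$(q+3) + v$(q+4)"
  using sum_lessThan_split_01_range_tail[OF assms, of "\<lambda>j. v $ j" 4]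
  by (simp add: eval_nat_numeral ac_simps)

definition U_poly :: "real \<Rightarrow> real \<Rightarrow> real" where
  "U_poly k m = k^6 - m*k^5 + k^5 - 5*m*k^4 - 9*k^4 - m*k^3 - 13*k^3 + 11*m*k^2 + 3*k^2
     + m*k + 7*k - 2*m"

text \<open>Coordinates of an eigenvector of \<open>U(q,3)\<^sup>c\<close> for a root \<open>k\<close> of \<open>U_poly k m\<close>, where
  \<open>m = q - 1\<close> is the number of free star leaves: at the star centre, the linking star leaf,
  each free leaf, the centre of \<open>S\<^sup>3\<^sub>4\<close>, its linking pendant, and each vertex of its
  pendant edge.\<close>

definition coord_star_centre :: "real \<Rightarrow> real \<Rightarrow> real" where
  "coord_star_centre k m = k^5 - m*k^4 + k^4 - 5*m*k^3 - 5*k^3 - 5*m*k^2 - 5*k^2 + 3*m*k + 2*k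
     + 2*m + 2"

definition coord_star_link :: "real \<Rightarrow> real \<Rightarrow> real" where
  "coord_star_link k m = 3*k^3 + m*k^2 + 5*k^2 + 2*m*k - 2"

definition coord_leaf :: "real \<Rightarrow> real" where
  "coord_leaf k = 4*k^3 + 7*k^2 - 3*k - 2"

definition coord_centre :: "real \<Rightarrow> real \<Rightarrow> real" where
  "coord_centre k m = k^4 - m*k^3 + k^3 - m*k^2 - 2*k^2 + 3*m*k + 2*m + 2"

definition coord_link :: "real \<Rightarrow> real \<Rightarrow> real" where
  "coord_link k m = k^4 - m*k^3 + 3*k^3 - 3*m*k^2 - k^2 - 2*m*k - 3*k"

definition coord_edge :: "real \<Rightarrow> real \<Rightarrow> real" where
  "coord_edge k m = k^4 - m*k^3 + 2*k^3 - 2*m*k^2 + k^2 - k - 1"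

lemma coords_eigen_equations:
  fixes k m :: real
  shows "k * coord_star_centre k m
      = coord_centre k m + coord_link k m + 2 * coord_edge k m + U_poly k m"
    and "k * coord_star_link k m = m * coord_leaf k + coord_centre k m + 2 * coord_edge k m"
    and "k * coord_leaf k = coord_star_link k m + (m-1) * coord_leaf k + coord_centre k m
      + coord_link k m + 2 * coord_edge k m"
    and "k * coord_centre k m = coord_star_centre k m + coord_star_link k m + m * coord_leaf k"
    and "k * coord_link k m = coord_star_centre k m + m * coord_leaf k + 2 * coord_edge k m"
    and "k * coord_edge k m
      = coord_star_centre k m + coord_star_link k m + m * coord_leaf k + coord_link k m"
  unfolding U_poly_def coord_star_centre_def coord_star_link_def coord_leaf_def coord_centre_def
    coord_link_def coord_edge_def
  by Groebner_Basis.algebra+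

lemma compl_U_eigenvalue_of_root:
  assumes q: "2 \<le> q" and root: "U_poly k (real q - 1) = 0" and leaf: "coord_leaf k \<noteq> 0"
  shows "eigenvalue (adj_mat (q+5) (compl_graph (U_graph q 3))) k"
  unfolding eigenvalue_adj_mat_iff
proof (intro bexI conjI allI impI)
  define m where "m = real q - 1"
  define v :: "real vec" where "v = vec (q+5) (\<lambda>i.
      if i = 0 then coord_star_centre k m else if i = 1 then coord_star_link k m
      else if i \<le> q then coord_leaf k else if i = q+1 then coord_centre k m
      else if i = q+2 then coord_link k m else coord_edge k m)"
  show v: "v \<in> carrier_vec (q+5)"
    unfolding v_def by simp
  have vv: "v$0 = coord_star_centre k m" "v$1 = coord_star_link k m" "v$(q+1) = coord_centre k m"
      "v$(q+2) = coord_link k m" "v$(q+3) = coord_edge k m" "v$(q+4) = coord_edge k m"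
    unfolding v_def using q by auto
  have vleaf: "v$i = coord_leaf k" if "2 \<le> i" "i \<le> q" for i
    unfolding v_def using that by auto
  show "v \<noteq> 0\<^sub>v (q+5)"
  proof
    assume "v = 0\<^sub>v (q+5)"
    then show False using vleaf[of 2] q leaf by simp
  qed
  have "(\<Sum>j\<in>{2..q}. v$j) = m * coord_leaf k"
    using q vleaf unfolding m_def by (simp add: of_nat_diff)
  then have S: "(\<Sum>j<q+5. v$j) = coord_star_centre k m + coord_star_link k m + m * coord_leaf k
      + coord_centre k m + coord_link k m + 2 * coord_edge k m"
    using sum_vec_U_split[of q v] q vv by simp
  note rows = compl_U_mult_vec[OF _ v, unfolded S] and E = coords_eigen_equations[of k m]
  have root': "U_poly k m = 0"
    using root unfolding m_def .
  fix i assume "i < q+5"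
  then consider "i = 0" | "i = 1" | "2 \<le> i \<and> i \<le> q" | "i = q+1" | "i = q+2" | "i = q+3" | "i = q+4"
    by linarith
  then show "(adj_mat (q+5) (compl_graph (U_graph q 3)) *\<^sub>v v) $ i = k * v $ i"
  proof cases
    case 3
    then show ?thesis
      using rows(3)[of i] vleaf[of i] E(3) vv q by (simp add: algebra_simps)
  qed (use q rows E root' vv in \<open>simp_all add: algebra_simps\<close>)
qed

section \<open>Position of the eigenvalues relative to \<open>\<theta>\<close>\<close>

definition theta :: "real \<Rightarrow> real" where
  "theta x = (15 - 8*x) / (2*x + 1)"

lemma theta_bounds:
  assumes "9 \<le> x"
  shows "-4 < theta x" and "theta x \<le> -3"
  using assms unfolding theta_def by (simp_all add: less_divide_eq divide_le_eq)

text \<open>The sign conditions are certified by substituting \<open>x = 13 + r\<close> (and \<open>k = \<theta>(x) - w/(2x+1)\<close>,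
  \<open>w \<ge> 0\<close>) and clearing denominators: the result is, up to sign, a polynomial in \<open>r, w\<close> with
  positive coefficients.\<close>

lemma U'_poly_neg_below_theta:
  assumes "13 \<le> x" "k \<le> theta x"
  shows "U'_poly k (x - 5) < 0"
proof -
  define r where "r = x - 13"
  define D where "D = 2*x + 1"
  define w where "w = 15 - 8*x - D*k"
  have r: "r \<ge> 0" and D: "D > 0"
    using assms(1) unfolding r_def D_def by simp_all
  have w: "w \<ge> 0"
    using assms(2) D unfolding w_def D_def theta_def by (simp add: pos_le_divide_eq mult.commute)
  have "D^5 * U'_poly k (x - 5) = - ((146898188 + r * (108174339 + r * (31112224 + r * (4483868
      + r * (341944 + r * (13040 + r * 192)))))) + w * ((217518170 + r * (95136687 + r * (16499920
      + r * (1412912 + r * (59440 + r * 976))))) + w * ((8771264 + r * (2938761 + r * (362718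
      + r * (19412 + r * 376)))) + w * ((119521 + r * (27972 + r * (2084 + r * 48)))
      + w * ((634 + r * (81 + r * 2)) + w * 1)))))"
    unfolding U'_poly_def w_def D_def r_def by Groebner_Basis.algebra
  also have "\<dots> < 0"
    using r w by (simp only: neg_less_0_iff_less, intro add_pos_nonneg mult_nonneg_nonneg add_nonneg_nonneg; simp)
  finally show ?thesis
    using D by (simp add: mult_less_0_iff)
qed

lemma U_poly_minus_pos:
  assumes "13 \<le> x"
  shows "U_poly (-x) (x - 6) > 0"
proof -
  define r where "r = x - 13"
  have r: "r \<ge> 0"
    using assms unfolding r_def by simp
  have "U_poly (-x) (x - 6) = 5855147 + r * (2942651 + r * (616136 + r * (68762 + r * (4312
      + r * (144 + r * 2)))))"
    unfolding U_poly_def r_def by Groebner_Basis.algebra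
  also have "\<dots> > 0"
    using r by (intro add_pos_nonneg mult_nonneg_nonneg add_nonneg_nonneg; simp)
  finally show ?thesis .
qed

lemma U_poly_theta_neg:
  assumes "13 \<le> x"
  shows "U_poly (theta x) (x - 6) < 0"
proof -
  define r where "r = x - 13"
  define D where "D = 2*x + 1"
  define k where "k = theta x"
  have r: "r \<ge> 0" and D: "D > 0"
    using assms unfolding r_def D_def by simp_all
  have Dk: "D * k = 15 - 8*x"
    using D unfolding D_def k_def theta_def by simp
  have "D^6 * U_poly k (x - 6) = (D*k)^6 - (x-6)*(D*k)^5*D + (D*k)^5*D - 5*(x-6)*(D*k)^4*D^2
      - 9*(D*k)^4*D^2 - (x-6)*(D*k)^3*D^3 - 13*(D*k)^3*D^3 + 11*(x-6)*(D*k)^2*D^4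
      + 3*(D*k)^2*D^4 + (x-6)*(D*k)*D^5 + 7*(D*k)*D^5 - 2*(x-6)*D^6"
    unfolding U_poly_def by Groebner_Basis.algebra
  also have "\<dots> = - (19942196165 + r * (13746321465 + r * (3959529406 + r * (622214536
      + r * (58091464 + r * (3253536 + r * (102304 + r * 1408)))))))"
    unfolding Dk unfolding D_def r_def by Groebner_Basis.algebra
  also have "\<dots> < 0"
    using r by (simp only: neg_less_0_iff_less, intro add_pos_nonneg mult_nonneg_nonneg add_nonneg_nonneg; simp)
  finally have "D^6 * U_poly k (x - 6) < 0" .
  then show ?thesis
    using D unfolding k_def by (simp add: mult_less_0_iff)
qed

lemma coord_leaf_neg:
  assumes "k \<le> -3"
  shows "coord_leaf k < 0"
proof -
  define u where "u = -3 - k"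
  have u: "u \<ge> 0" "k = -3 - u"
    using assms unfolding u_def by simp_all
  have "coord_leaf k = - (38 + u * (63 + u * (29 + u * 4)))"
    unfolding coord_leaf_def u(2) by Groebner_Basis.algebra
  also have "\<dots> < 0"
    using u by (simp only: neg_less_0_iff_less, intro add_pos_nonneg mult_nonneg_nonneg add_nonneg_nonneg; simp)
  finally show ?thesis .
qed

lemma compl_U'_eigenvalue_gt_theta:
  assumes p: "9 \<le> p" and ev: "eigenvalue (adj_mat (p+4) (compl_graph (U'_graph p))) k"
  shows "theta (p+4) < k"
proof (rule ccontr)
  assume "\<not> theta (p+4) < k"
  then have k: "k \<le> theta (p+4)" by simp
  moreover have "theta (p+4) \<le> -3"
    using theta_bounds(2) p by simp
  ultimately have "U'_poly k (real p - 1) = 0"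
    using compl_U'_eigenvalue_root[OF _ ev] p by simp
  moreover have "U'_poly k (real (p+4) - 5) < 0"
    using U'_poly_neg_below_theta[OF _ k] p by simp
  ultimately show False by simp
qed

lemma compl_U_eigenvalue_le_theta:
  assumes q: "8 \<le> q"
  obtains k where "eigenvalue (adj_mat (q+5) (compl_graph (U_graph q 3))) k" and "k \<le> theta (q+5)"
proof -
  define x where "x = real (q+5)"
  have x: "13 \<le> x"
    using q unfolding x_def by simp
  have "-x \<le> theta x"
    using theta_bounds(1)[of x] x by simp
  moreover have "U_poly (theta x) (x-6) \<le> 0"
    using U_poly_theta_neg[OF x] by simp
  moreover have "0 \<le> U_poly (-x) (x-6)"
    using U_poly_minus_pos[OF x] by simp
  moreover have "continuous_on {-x..theta x} (\<lambda>k. U_poly k (x-6))"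
    unfolding U_poly_def by (intro continuous_intros)
  ultimately obtain k where k: "k \<le> theta x" "U_poly k (x-6) = 0"
    using IVT2'[of "\<lambda>k. U_poly k (x-6)" "theta x" 0 "-x"] by blast
  have "k \<le> -3"
    using k(1) theta_bounds(2)[of x] x by simp
  then have "eigenvalue (adj_mat (q+5) (compl_graph (U_graph q 3))) k"
    using compl_U_eigenvalue_of_root[of q k] q k(2) coord_leaf_neg unfolding x_def by force
  then show thesis
    using that k(1) unfolding x_def by blast
qed

theorem lemma2p1:
  fixes n :: nat
  assumes "n \<ge> 13"
  shows "lambda_min (adj_mat n (compl_graph (U_graph (n - 5) 3)))
       < lambda_min (adj_mat n (compl_graph (U'_graph (n - 4))))"
proof -
  have n5: "n - 5 + 5 = n" and n4: "n - 4 + 4 = n" and "8 \<le> n - 5"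
    using assms by simp_all
  then obtain k where k: "eigenvalue (adj_mat n (compl_graph (U_graph (n - 5) 3))) k" "k \<le> theta n"
    by (metis compl_U_eigenvalue_le_theta)
  have "eigenvalue (adj_mat n (compl_graph (U'_graph (n - 4)))) 0"
    using compl_U'_eigenvalue_zero[of "n - 4"] assms unfolding n4 by simp
  then have "theta n < lambda_min (adj_mat n (compl_graph (U'_graph (n - 4))))"
    using compl_U'_eigenvalue_gt_theta[of "n - 4"] eigenvalue_lambda_min assms unfolding n4 by simp
  moreover have "lambda_min (adj_mat n (compl_graph (U_graph (n - 5) 3))) \<le> k"
    using lambda_min_le[OF k(1)] .
  ultimately show ?thesis
    using k(2) by linarith
qed

end
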